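(* Let $C=C_{9,1}$ be the Clifford system of rank $10$ on $\mathbb{R}^{32}$. Then the Clifford foliation $(\mathbb{S}^{31},\mathcal{F}_C)$ is not homogeneous.
   Context: A Clifford system $C$ of rank $m+1$ on $\mathbb{R}^{2l}$, with the standard inner product, is an $(m+1)$-dimensional linear subspace $\mathbb{R}_C$ of the symmetric endomorphisms of $\mathbb{R}^{2l}$. It must admit a basis $P_0,\dots,P_m$ with $P_i^2=\mathrm{Id}$ and $P_iP_j=-P_jP_i$ for $i\ne j$. For $m=9$ and $l=16$ such a system exists and is unique up to conjugation by $O(32)$; it is denoted $C_{9,1}$. The map $\pi_C$ is $\pi_C(x)=\sum_i\langle P_ix,x\rangle P_i$ on $\mathbb{S}^{2l-1}$, and $\mathcal{F}_C$ is the partition into fibers of $\pi_C$. Homogeneous means the leaves are the orbits of an isometric action of a connected Lie group. *)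

theory Defs
  imports "HOL-Analysis.Analysis"
begin

text \<open>A Clifford system of rank m+1 on R^n, given by a basis P 0, ..., P m of
  symmetric matrices with P_i^2 = Id and P_i P_j = - P_j P_i for i different from j.\<close>
definition clifford_system :: "nat \<Rightarrow> (nat \<Rightarrow> real^'n^'n) \<Rightarrow> bool" where
  "clifford_system m P \<longleftrightarrow>
     (\<forall>i\<le>m. transpose (P i) = P i \<and> P i ** P i = mat 1) \<and>
     (\<forall>i\<le>m. \<forall>j\<le>m. i \<noteq> j \<longrightarrow> P i ** P j = - (P j ** P i))"

definition clifford_map :: "nat \<Rightarrow> (nat \<Rightarrow> real^'n^'n) \<Rightarrow> real^'n \<Rightarrow> real^'n^'n" where
  "clifford_map m P x = (\<Sum>i\<le>m. ((P i *v x) \<bullet> x) *\<^sub>R P i)"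

definition clifford_leaf :: "nat \<Rightarrow> (nat \<Rightarrow> real^'n^'n) \<Rightarrow> real^'n \<Rightarrow> (real^'n) set" where
  "clifford_leaf m P x = {y \<in> sphere 0 1. clifford_map m P y = clifford_map m P x}"

text \<open>A foliation of the unit sphere (given by its leaf map) is homogeneous if its
  leaves are the orbits of an isometric action of a connected Lie group.  Such an
  action factors through a path-connected subgroup of O(n) (the image), and
  conversely every path-connected subgroup of O(n) is a connected Lie subgroup
  (Yamabe); so we quantify over path-connected subgroups H of O(n).\<close>
definition homogeneous_foliation :: "(real^'n \<Rightarrow> (real^'n) set) \<Rightarrow> bool" where
  "homogeneous_foliation leaf \<longleftrightarrow>
     (\<exists>H :: (real^'n^'n) set.
        H \<subseteq> {Q. orthogonal_matrix Q} \<and> mat 1 \<in> H \<and>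
        (\<forall>A\<in>H. \<forall>B\<in>H. A ** B \<in> H) \<and> (\<forall>A\<in>H. transpose A \<in> H) \<and>
        path_connected H \<and>
        (\<forall>x\<in>sphere 0 1. (\<lambda>A. A *v x) ` H = leaf x))"

end

theory Submission
  imports Defs
begin

text \<open>An isometry A mapping every point into its own leaf preserves \<open>\<pi>\<^sub>C\<close>; polarising, this
  gives \<open>A\<^sup>T P\<^sub>i A = P\<^sub>i\<close>, so A commutes with every monomial in the \<open>P\<^sub>i\<close>.  The monomials
  \<open>P\<^sub>0, P\<^sub>1P\<^sub>2P\<^sub>3P\<^sub>4, P\<^sub>1P\<^sub>2P\<^sub>5P\<^sub>6, P\<^sub>1P\<^sub>3P\<^sub>5P\<^sub>7, P\<^sub>1P\<^sub>2P\<^sub>7P\<^sub>8\<close> are commuting symmetric involutions,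
  and each product of a nonempty subfamily is traceless because it anticommutes with some
  \<open>P\<^sub>i\<close>.  Hence the product Q of their +1 eigenprojections is an orthogonal projection of
  trace \<open>32 / 2\<^sup>5 = 1\<close> commuting with every such A.  If x spans the image of Q, then
  \<open>P\<^sub>0 x = x\<close>, and \<open>y = P\<^sub>1P\<^sub>2 x\<close> is a unit vector orthogonal to x in the leaf of x.  Were the
  leaves orbits, we would have \<open>y = A x\<close> and thus \<open>Q y = y\<close>, so Q would have rank at least 2.\<close>

lemma trace_scaleR: "trace (c *\<^sub>R A) = c * trace (A::real^'n^'n)"
  by (simp add: trace_def sum_distrib_left)

lemma trace_uminus: "trace (- A) = - trace (A::real^'n^'n)"
  using trace_scaleR[of "-1" A] by simp

lemma trace_sum: "trace (sum f S) = (\<Sum>i\<in>S. trace (f i :: real^'n^'n))"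
  by (simp add: trace_def sum.swap[of _ S])

lemma matrix_add_rdistrib: "((A::real^'n^'m) + B) ** C = A ** C + B ** C"
  by (simp add: matrix_matrix_mult_def vec_eq_iff sum.distrib distrib_right)

lemma matrix_sum_ldistrib: "(A::real^'n^'m) ** sum f S = (\<Sum>i\<in>S. A ** f i)"
  by (induction S rule: infinite_finite_induct) (simp_all add: matrix_add_ldistrib)

lemma matrix_scaleR_left: "(c *\<^sub>R (A::real^'n^'m)) ** (B::real^'p^'n) = c *\<^sub>R (A ** B)"
  by (simp add: scalar_matrix_assoc)

lemma matrix_scaleR_right: "(A::real^'n^'m) ** (c *\<^sub>R (B::real^'p^'n)) = c *\<^sub>R (A ** B)"
  by (simp add: matrix_scalar_ac scalar_matrix_assoc)

lemma matrix_uminus_left: "(- (A::real^'n^'m)) ** (B::real^'p^'n) = - (A ** B)"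
  using matrix_scaleR_left[of "-1" A B] by simp

lemma matrix_uminus_right: "(A::real^'n^'m) ** (- (B::real^'p^'n)) = - (A ** B)"
  using matrix_scaleR_right[of A "-1" B] by simp

lemmas matrix_scalar_simps =
  matrix_scaleR_left matrix_scaleR_right matrix_uminus_left matrix_uminus_right

lemma transpose_add: "transpose ((A::real^'n^'m) + B) = transpose A + transpose B"
  by (simp add: transpose_def vec_eq_iff)

lemma transpose_diff: "transpose ((A::real^'n^'m) - B) = transpose A - transpose B"
  by (simp add: transpose_def vec_eq_iff)

lemma matrix_vector_mult_uminus: "(- (A::real^'n^'m)) *v x = - (A *v x)"
  by (simp add: matrix_vector_mult_def vec_eq_iff sum_negf)

lemma inner_matrix_vector_left: "((A::real^'n^'n) *v x) \<bullet> y = x \<bullet> (transpose A *v y)"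
  by (metis dot_lmul_matrix inner_commute transpose_matrix_vector)

lemma symmetric_matrix_eq_0_if_quadratic_form_eq_0:
  fixes M :: "real^'n^'n"
  assumes sym: "transpose M = M" and quad: "\<And>x. (M *v x) \<bullet> x = 0"
  shows "M = 0"
proof -
  have "(M *v x) \<bullet> y = 0" for x y
  proof -
    have "0 = (M *v (x + y)) \<bullet> (x + y)" using quad by simp
    also have "\<dots> = (M *v x) \<bullet> x + (M *v x) \<bullet> y + (M *v y) \<bullet> x + (M *v y) \<bullet> y"
      by (simp add: matrix_vector_right_distrib inner_add_left inner_add_right)
    also have "(M *v y) \<bullet> x = (M *v x) \<bullet> y"
      using inner_matrix_vector_left[of M y x] sym by (simp add: inner_commute)
    finally show ?thesis using quad by simp
  qed
  then have "M *v x = 0" for x by (metis inner_eq_zero_iff)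
  then show ?thesis by (simp add: matrix_eq)
qed

lemma quadratic_form_skew_symmetric:
  fixes M :: "real^'n^'n"
  assumes "transpose M = - M"
  shows "(M *v x) \<bullet> x = 0"
proof -
  have "(M *v x) \<bullet> x = - ((M *v x) \<bullet> x)"
    using inner_matrix_vector_left[of M x x] assms
    by (simp add: matrix_vector_mult_uminus inner_commute)
  then show ?thesis by simp
qed

lemma Bessel_inequality_2:
  fixes r x y :: "real^'n"
  assumes "norm x = 1" "norm y = 1" "x \<bullet> y = 0"
  shows "(r \<bullet> x)\<^sup>2 + (r \<bullet> y)\<^sup>2 \<le> r \<bullet> r"
proof -
  define a b where "a = r \<bullet> x" and "b = r \<bullet> y"
  have "x \<bullet> x = 1" "y \<bullet> y = 1" using assms by (simp_all add: norm_eq_1)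
  have "0 \<le> (r - a *\<^sub>R x - b *\<^sub>R y) \<bullet> (r - a *\<^sub>R x - b *\<^sub>R y)"
    by simp
  also have "\<dots> = r \<bullet> r - 2*a*(r \<bullet> x) - 2*b*(r \<bullet> y) + a*a*(x \<bullet> x) + 2*a*b*(x \<bullet> y) + b*b*(y \<bullet> y)"
    by (simp add: inner_diff_left inner_diff_right inner_commute[of x r] inner_commute[of y r]
        inner_commute[of y x] algebra_simps)
  also have "\<dots> = r \<bullet> r - a\<^sup>2 - b\<^sup>2"
    using assms \<open>x \<bullet> x = 1\<close> \<open>y \<bullet> y = 1\<close> by (simp add: a_def b_def power2_eq_square)
  finally show ?thesis by (simp add: a_def b_def)
qed

lemma trace_projection_ge_2:
  fixes Q :: "real^'n^'n"
  assumes sym: "transpose Q = Q" and idem: "Q ** Q = Q"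
    and fixed: "Q *v x = x" "Q *v y = y"
    and orthonormal: "norm x = 1" "norm y = 1" "x \<bullet> y = 0"
  shows "2 \<le> trace Q"
proof -
  have diagonal: "(x$k)\<^sup>2 + (y$k)\<^sup>2 \<le> Q$k$k" for k
  proof -
    \<comment> \<open>\<open>Q\<^sub>k\<^sub>k = |Q e\<^sub>k|\<^sup>2\<close>, and the k-th row of Q has inner products \<open>x\<^sub>k\<close>, \<open>y\<^sub>k\<close> with x, y.\<close>
    have "Q$k$k = (Q ** Q)$k$k" using idem by simp
    also have "\<dots> = (\<Sum>j\<in>UNIV. Q$k$j * Q$j$k)" by (simp add: matrix_matrix_mult_def)
    also have "\<dots> = Q$k \<bullet> Q$k"
    proof -
      have "Q$j$k = Q$k$j" for j using sym by (metis transpose_def vec_lambda_beta)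
      then show ?thesis by (simp add: inner_vec_def)
    qed
    finally have "Q$k$k = Q$k \<bullet> Q$k" .
    moreover have "Q$k \<bullet> x = x$k" "Q$k \<bullet> y = y$k"
      using fixed by (metis matrix_vector_mul_component)+
    ultimately show ?thesis using Bessel_inequality_2[OF orthonormal, of "Q$k"] by simp
  qed
  have "x \<bullet> x = 1" "y \<bullet> y = 1" using orthonormal by (simp_all add: norm_eq_1)
  then have "2 = (\<Sum>k\<in>UNIV. (x$k)\<^sup>2 + (y$k)\<^sup>2)"
    by (simp add: sum.distrib inner_vec_def power2_eq_square)
  also have "\<dots> \<le> (\<Sum>k\<in>UNIV. Q$k$k)" by (rule sum_mono) (rule diagonal)
  finally show ?thesis by (simp add: trace_def)
qed

lemma idempotent_fixes_unit_vector:
  fixes Q :: "real^'n^'n"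
  assumes "Q ** Q = Q" and "trace Q \<noteq> 0"
  obtains x where "norm x = 1" "Q *v x = x"
proof -
  have "Q \<noteq> 0" using assms(2) by (auto simp: trace_def)
  then obtain v where "Q *v v \<noteq> 0" by (metis matrix_eq matrix_vector_mult_0)
  define x where "x = (1 / norm (Q *v v)) *\<^sub>R (Q *v v)"
  have "norm x = 1" using \<open>Q *v v \<noteq> 0\<close> by (simp add: x_def)
  moreover have "Q *v x = x"
    using assms(1) by (simp add: x_def matrix_vector_mult_scaleR matrix_vector_mul_assoc)
  ultimately show ?thesis by (rule that)
qed

definition matrix_prod_list :: "(real^'n^'n) list \<Rightarrow> real^'n^'n" where
  "matrix_prod_list As = foldr (**) As (mat 1)"

lemma matrix_prod_list_simps [simp]:
  "matrix_prod_list [] = mat 1"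
  "matrix_prod_list (A # As) = A ** matrix_prod_list As"
  by (simp_all add: matrix_prod_list_def)

lemma matrix_prod_list_append:
  "matrix_prod_list (As @ Bs) = matrix_prod_list As ** matrix_prod_list Bs"
  by (induction As) (simp_all add: matrix_mul_assoc)

lemma matrix_prod_list_commute:
  assumes "\<And>A. A \<in> set As \<Longrightarrow> X ** A = A ** X"
  shows "X ** matrix_prod_list As = matrix_prod_list As ** X"
  using assms by (induction As) (simp_all, metis matrix_mul_assoc)

definition eigenproj_one :: "real^'n^'n \<Rightarrow> real^'n^'n" where
  "eigenproj_one W = (1/2) *\<^sub>R (mat 1 + W)"

lemma eigenproj_one_commute: "X ** W = W ** X \<Longrightarrow> X ** eigenproj_one W = eigenproj_one W ** X"
  by (simp add: eigenproj_one_def matrix_scalar_simps matrix_add_ldistrib matrix_add_rdistrib)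

lemma involution_mult_eigenproj_one: "W ** W = mat 1 \<Longrightarrow> W ** eigenproj_one W = eigenproj_one W"
  by (simp add: eigenproj_one_def matrix_add_ldistrib matrix_scaleR_right add.commute)

lemma eigenproj_one_projection:
  assumes "transpose W = W" "W ** W = mat 1"
  shows "transpose (eigenproj_one W) = eigenproj_one W"
    and "eigenproj_one W ** eigenproj_one W = eigenproj_one W"
  using assms
  by (simp_all add: eigenproj_one_def transpose_scalar transpose_add matrix_scalar_simps
      matrix_add_ldistrib matrix_add_rdistrib scaleR_add_right vec_eq_iff)

lemma eigenproj_one_prod_projection:
  assumes "\<forall>W\<in>set Ws. transpose W = W \<and> W ** W = mat 1"
    and "\<forall>V\<in>set Ws. \<forall>W\<in>set Ws. V ** W = W ** V"
  shows "transpose (matrix_prod_list (map eigenproj_one Ws)) = matrix_prod_list (map eigenproj_one Ws)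
    \<and> matrix_prod_list (map eigenproj_one Ws) ** matrix_prod_list (map eigenproj_one Ws)
      = matrix_prod_list (map eigenproj_one Ws)"
  using assms
proof (induction Ws)
  case Nil then show ?case by simp
next
  case (Cons W Ws)
  define F where "F = eigenproj_one W"
  define R where "R = matrix_prod_list (map eigenproj_one Ws)"
  have F: "transpose F = F" "F ** F = F"
    using eigenproj_one_projection[of W] Cons.prems(1) by (auto simp: F_def)
  have R: "transpose R = R" "R ** R = R"
    using Cons by (auto simp: R_def)
  have "W ** R = R ** W"
    unfolding R_def using Cons.prems(2)
    by (intro matrix_prod_list_commute) (auto intro: eigenproj_one_commute)
  then have FR: "F ** R = R ** F"
    unfolding F_def by (metis eigenproj_one_commute)
  have "transpose (F ** R) = F ** R"
    using F R FR by (simp add: matrix_transpose_mul)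
  moreover have "(F ** R) ** (F ** R) = F ** R"
    by (metis F(2) R(2) FR matrix_mul_assoc)
  ultimately show ?case by (simp add: F_def R_def)
qed

lemma subseqs_map: "subseqs (map f xs) = map (map f) (subseqs xs)"
  by (induction xs) (simp_all add: Let_def)

lemma sum_list_subseqs_eq_Nil:
  assumes "\<And>s. s \<in> set (subseqs xs) \<Longrightarrow> s \<noteq> [] \<Longrightarrow> f s = 0"
  shows "(\<Sum>s\<leftarrow>subseqs xs. f s) = f []"
  using assms
proof (induction xs)
  case (Cons x xs)
  have "map (\<lambda>s. f (x # s)) (subseqs xs) = map (\<lambda>s. 0) (subseqs xs)"
    using Cons.prems by (intro map_cong) (auto simp: Let_def)
  then have "(\<Sum>s\<leftarrow>subseqs xs. f (x # s)) = 0" by (metis sum_list_0)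
  moreover have "(\<Sum>s\<leftarrow>subseqs xs. f s) = f []"
    using Cons by (auto simp: Let_def)
  ultimately show ?case by (simp add: Let_def o_def)
qed simp

text \<open>Expanding \<open>\<Prod> (1 + W) / 2\<close> and moving each W cyclically under the trace.\<close>
lemma trace_eigenproj_one_prod:
  "trace (matrix_prod_list (map eigenproj_one Ws) ** M) =
     (\<Sum>s\<leftarrow>subseqs Ws. trace (matrix_prod_list s ** M)) / 2 ^ length Ws"
proof (induction Ws arbitrary: M)
  case (Cons W Ws)
  define R where "R = matrix_prod_list (map eigenproj_one Ws)"
  have "trace (matrix_prod_list (map eigenproj_one (W # Ws)) ** M) =
      (trace (R ** M) + trace (R ** (M ** W))) / 2"
    using trace_mul_sym[of W "R ** M"]
    by (simp add: R_def eigenproj_one_def matrix_scalar_simps matrix_add_rdistrib trace_scaleR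
        trace_add matrix_mul_assoc)
  also have "trace (R ** (M ** W)) =
      (\<Sum>s\<leftarrow>subseqs Ws. trace (matrix_prod_list s ** (M ** W))) / 2 ^ length Ws"
    using Cons.IH[of "M ** W"] by (simp add: R_def)
  also have "(\<Sum>s\<leftarrow>subseqs Ws. trace (matrix_prod_list s ** (M ** W))) =
      (\<Sum>s\<leftarrow>subseqs Ws. trace (matrix_prod_list (W # s) ** M))"
    using trace_mul_sym[of W "matrix_prod_list _ ** M"] by (simp add: matrix_mul_assoc)
  finally show ?case
    by (simp add: R_def Cons Let_def o_def add_divide_distrib)
qed simp

lemma trace_eigenproj_one_prod_traceless:
  fixes Ws :: "(real^'n^'n) list"
  assumes "\<And>s. s \<in> set (subseqs Ws) \<Longrightarrow> s \<noteq> [] \<Longrightarrow> trace (matrix_prod_list s) = 0"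
  shows "trace (matrix_prod_list (map eigenproj_one Ws)) = CARD('n) / 2 ^ length Ws"
  using trace_eigenproj_one_prod[of Ws "mat 1"]
    sum_list_subseqs_eq_Nil[of Ws "\<lambda>s. trace (matrix_prod_list s)"] assms
  by (simp add: trace_I)

definition clifford_monomial :: "(nat \<Rightarrow> real^'n^'n) \<Rightarrow> nat list \<Rightarrow> real^'n^'n" where
  "clifford_monomial P w = matrix_prod_list (map P w)"

lemma clifford_monomial_simps [simp]:
  "clifford_monomial P [] = mat 1"
  "clifford_monomial P (i # w) = P i ** clifford_monomial P w"
  by (simp_all add: clifford_monomial_def)

lemma clifford_monomial_append:
  "clifford_monomial P (u @ v) = clifford_monomial P u ** clifford_monomial P v"
  by (simp add: clifford_monomial_def matrix_prod_list_append)

lemma matrix_prod_list_clifford_monomials: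
  "matrix_prod_list (map (clifford_monomial P) ws) = clifford_monomial P (concat ws)"
  by (induction ws) (simp_all add: clifford_monomial_append)

definition commute_sign :: "nat \<Rightarrow> nat list \<Rightarrow> real" where
  "commute_sign i w = (-1) ^ length (filter (\<lambda>j. j \<noteq> i) w)"

definition monomial_commute_sign :: "nat list \<Rightarrow> nat list \<Rightarrow> real" where
  "monomial_commute_sign u v = (\<Prod>i\<leftarrow>u. commute_sign i v)"

primrec reversal_sign :: "nat list \<Rightarrow> real" where
  "reversal_sign [] = 1"
| "reversal_sign (i # w) = reversal_sign w * commute_sign i w"

lemma commute_sign_square: "commute_sign i w * commute_sign i w = 1"
  by (simp add: commute_sign_def power_mult_distrib[symmetric])

lemma clifford_map_scaleR: "clifford_map m P (c *\<^sub>R x) = c\<^sup>2 *\<^sub>R clifford_map m P x"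
  by (simp add: clifford_map_def matrix_vector_mult_scaleR scaleR_sum_right power2_eq_square mult.assoc)

locale clifford =
  fixes m :: nat and P :: "nat \<Rightarrow> real^'n^'n"
  assumes clifford_system: "clifford_system m P"
begin

abbreviation monomial :: "nat list \<Rightarrow> real^'n^'n" where
  "monomial \<equiv> clifford_monomial P"

lemma P_transpose: "i \<le> m \<Longrightarrow> transpose (P i) = P i"
  using clifford_system unfolding clifford_system_def by blast

lemma P_square: "i \<le> m \<Longrightarrow> P i ** P i = mat 1"
  using clifford_system unfolding clifford_system_def by blast

lemma P_anticommute: "i \<le> m \<Longrightarrow> j \<le> m \<Longrightarrow> i \<noteq> j \<Longrightarrow> P i ** P j = - (P j ** P i)"
  using clifford_system unfolding clifford_system_def by blast

lemma P_inner_P: "i \<le> m \<Longrightarrow> (P i *v x) \<bullet> (P i *v y) = x \<bullet> y"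
  by (simp add: inner_matrix_vector_left[of "P i"] P_transpose matrix_vector_mul_assoc P_square)

lemma P_mult_monomial:
  assumes "i \<le> m" "set w \<subseteq> {..m}"
  shows "P i ** monomial w = commute_sign i w *\<^sub>R (monomial w ** P i)"
  using assms(2)
proof (induction w)
  case Nil
  then show ?case by (simp add: commute_sign_def)
next
  case (Cons j w)
  then have j: "j \<le> m" and IH: "P i ** monomial w = commute_sign i w *\<^sub>R (monomial w ** P i)"
    by auto
  show ?case
  proof (cases "j = i")
    case True
    have "P i ** (monomial w ** P i) = commute_sign i w *\<^sub>R (P i ** (P i ** monomial w))"
      using IH commute_sign_square[of i w] by (simp add: matrix_scalar_simps matrix_mul_assoc)
    then show ?thesis
      using True assms(1) by (simp add: commute_sign_def P_square matrix_mul_assoc[symmetric])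
  next
    case False
    have "P i ** monomial (j # w) = - (P j ** (P i ** monomial w))"
      using P_anticommute[of i j] False j assms(1)
      by (simp add: matrix_mul_assoc matrix_uminus_left)
    also have "\<dots> = (- commute_sign i w) *\<^sub>R (monomial (j # w) ** P i)"
      using IH by (simp add: matrix_scalar_simps matrix_mul_assoc)
    also have "- commute_sign i w = commute_sign i (j # w)"
      using False by (simp add: commute_sign_def)
    finally show ?thesis .
  qed
qed

text \<open>If \<open>P\<^sub>i\<close> anticommutes with a monomial, conjugation by \<open>P\<^sub>i\<close> negates it but keeps its trace.\<close>
lemma trace_monomial_eq_0:
  assumes "i \<le> m" "set w \<subseteq> {..m}" "odd (length (filter (\<lambda>j. j \<noteq> i) w))"
  shows "trace (monomial w) = 0"
proof -
  have anti: "monomial w ** P i = - (P i ** monomial w)"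
    using P_mult_monomial[OF assms(1,2)] assms(3) commute_sign_square[of i w]
    by (simp add: commute_sign_def)
  have "trace (monomial w) = trace (P i ** (monomial w ** P i))"
    using trace_mul_sym[of "monomial w ** P i" "P i"] assms(1)
    by (simp add: matrix_mul_assoc[symmetric] P_square)
  also have "\<dots> = - trace (monomial w)"
    using assms(1) by (simp add: anti matrix_uminus_right trace_uminus matrix_mul_assoc P_square)
  finally show ?thesis by simp
qed

lemma monomial_commute:
  assumes "set u \<subseteq> {..m}" "set v \<subseteq> {..m}"
  shows "monomial u ** monomial v = monomial_commute_sign u v *\<^sub>R (monomial v ** monomial u)"
  using assms(1)
proof (induction u)
  case Nil then show ?case by (simp add: monomial_commute_sign_def)
next
  case (Cons i u)
  then have i: "i \<le> m" and IH: "monomial u ** monomial v =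
      monomial_commute_sign u v *\<^sub>R (monomial v ** monomial u)" by auto
  have "monomial (i # u) ** monomial v = monomial_commute_sign u v *\<^sub>R ((P i ** monomial v) ** monomial u)"
    using IH by (simp add: matrix_mul_assoc[symmetric] matrix_scalar_simps)
  also have "\<dots> = (monomial_commute_sign u v * commute_sign i v) *\<^sub>R (monomial v ** monomial (i # u))"
    using P_mult_monomial[OF i assms(2)] by (simp add: matrix_mul_assoc[symmetric] matrix_scalar_simps)
  finally show ?case by (simp add: monomial_commute_sign_def mult.commute)
qed

lemma transpose_monomial: "set w \<subseteq> {..m} \<Longrightarrow> transpose (monomial w) = monomial (rev w)"
  by (induction w) (simp_all add: matrix_transpose_mul P_transpose clifford_monomial_append)

lemma monomial_rev: "set w \<subseteq> {..m} \<Longrightarrow> monomial (rev w) = reversal_sign w *\<^sub>R monomial w"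
proof (induction w)
  case (Cons i w)
  then have i: "i \<le> m" and w: "set w \<subseteq> {..m}" by auto
  have "monomial (rev (i # w)) = reversal_sign w *\<^sub>R (monomial w ** P i)"
    using Cons.IH w by (simp add: clifford_monomial_append matrix_scalar_simps)
  also have "monomial w ** P i = commute_sign i w *\<^sub>R monomial (i # w)"
    using P_mult_monomial[OF i w] commute_sign_square[of i w] by simp
  finally show ?case by simp
qed simp

lemma monomial_rev_mult_monomial: "set w \<subseteq> {..m} \<Longrightarrow> monomial (rev w) ** monomial w = mat 1"
proof (induction w)
  case (Cons i w)
  then show ?case
    using P_square[of i]
    by (simp add: clifford_monomial_append matrix_mul_assoc)
      (metis matrix_mul_assoc matrix_mul_lid)
qed simp

lemma monomial_symmetric_involution:
  assumes "set w \<subseteq> {..m}" "reversal_sign w = 1"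
  shows "transpose (monomial w) = monomial w \<and> monomial w ** monomial w = mat 1"
  using monomial_rev[OF assms(1)] transpose_monomial[OF assms(1)]
    monomial_rev_mult_monomial[OF assms(1)] assms(2)
  by simp

lemma commute_monomial:
  assumes "\<forall>j\<le>m. P j ** A = A ** P j" "set w \<subseteq> {..m}"
  shows "A ** monomial w = monomial w ** A"
  unfolding clifford_monomial_def using assms
  by (intro matrix_prod_list_commute) auto

lemma norm_P: "i \<le> m \<Longrightarrow> norm (P i *v x) = norm x"
  by (simp add: norm_eq_sqrt_inner P_inner_P)

lemma trace_P_mult_P:
  assumes "i \<le> m" "j \<le> m"
  shows "trace (P j ** P i) = (if i = j then CARD('n) else 0)"
proof (cases "i = j")
  case True
  then show ?thesis using assms by (simp add: P_square trace_I)
next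
  case False
  then have "trace (monomial [j, i]) = 0"
    using assms by (intro trace_monomial_eq_0[of j]) auto
  then show ?thesis using False by simp
qed

lemma P_coefficients_eq_0:
  assumes "(\<Sum>i\<le>m. c i *\<^sub>R P i) = 0" "j \<le> m"
  shows "c j = 0"
proof -
  have "0 = trace (P j ** (\<Sum>i\<le>m. c i *\<^sub>R P i))"
    using assms(1) by (simp add: trace_def)
  also have "\<dots> = (\<Sum>i\<le>m. c i * trace (P j ** P i))"
    by (simp add: matrix_sum_ldistrib trace_sum matrix_scaleR_right trace_scaleR)
  also have "\<dots> = (\<Sum>i\<le>m. if i = j then CARD('n) * c j else 0)"
    by (rule sum.cong) (auto simp: trace_P_mult_P assms(2))
  also have "\<dots> = CARD('n) * c j"
    using assms(2) by simp
  finally show ?thesis by simp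
qed

lemma commute_P_if_preserves_clifford_map:
  assumes orthogonal: "orthogonal_matrix A"
    and preserves: "\<forall>x\<in>sphere 0 1. clifford_map m P (A *v x) = clifford_map m P x"
    and j: "j \<le> m"
  shows "P j ** A = A ** P j"
proof -
  have "clifford_map m P (A *v x) = clifford_map m P x" for x
  proof (cases "x = 0")
    case False
    define u where "u = (1 / norm x) *\<^sub>R x"
    have "u \<in> sphere 0 1" "x = norm x *\<^sub>R u"
      using False by (simp_all add: u_def)
    then show ?thesis
      using preserves by (metis clifford_map_scaleR matrix_vector_mult_scaleR)
  qed simp
  then have "(\<Sum>i\<le>m. ((P i *v (A *v x)) \<bullet> (A *v x) - (P i *v x) \<bullet> x) *\<^sub>R P i) = 0" for x
    by (simp add: clifford_map_def scaleR_diff_left sum_subtractf)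
  then have quadratic_forms: "(P j *v (A *v x)) \<bullet> (A *v x) = (P j *v x) \<bullet> x" for x
    using P_coefficients_eq_0[OF _ j] by fastforce
  define M where "M = transpose A ** P j ** A - P j"
  have "transpose M = M"
    using j by (simp add: M_def transpose_diff matrix_transpose_mul P_transpose matrix_mul_assoc)
  moreover have "(M *v x) \<bullet> x = 0" for x
  proof -
    have "((transpose A ** P j ** A) *v x) \<bullet> x = (P j *v (A *v x)) \<bullet> (A *v x)"
      by (simp only: matrix_vector_mul_assoc[symmetric] inner_matrix_vector_left[of "transpose A"]
          transpose_transpose)
    then show ?thesis
      using quadratic_forms[of x]
      by (simp add: M_def matrix_vector_mult_diff_rdistrib inner_diff_left)
  qed
  ultimately have "M = 0" by (rule symmetric_matrix_eq_0_if_quadratic_form_eq_0)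
  then have conj: "transpose A ** P j ** A = P j" by (simp add: M_def)
  have "P j ** A = (A ** transpose A) ** P j ** A"
    using orthogonal by (simp add: orthogonal_matrix_def)
  also have "\<dots> = A ** P j"
    using conj by (simp add: matrix_mul_assoc[symmetric])
  finally show ?thesis .
qed

lemma P_conj_P:
  assumes "i \<le> m" "k \<le> m"
  shows "P i ** P k ** P i = (if k = i then P k else - P k)"
proof (cases "k = i")
  case True
  then show ?thesis using assms by (simp add: P_square)
next
  case False
  then have "P i ** P k ** P i = - (P k ** P i) ** P i"
    using assms P_anticommute[of i k] by simp
  also have "\<dots> = - P k"
    using assms by (simp add: matrix_uminus_left matrix_mul_assoc[symmetric] P_square)
  finally show ?thesis using False by simp
qed

lemma inner_P_conj:
  assumes "i \<le> m"
  shows "(B *v (P i *v z)) \<bullet> (P i *v z) = ((P i ** B ** P i) *v z) \<bullet> z"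
proof -
  have "(B *v (P i *v z)) \<bullet> (P i *v z) = (P i *v (B *v (P i *v z))) \<bullet> z"
    using inner_matrix_vector_left[of "P i" "B *v (P i *v z)" z] P_transpose[OF assms] by simp
  then show ?thesis by (simp add: matrix_vector_mul_assoc matrix_mul_assoc)
qed

lemma P_quadratic_form_eq_0_if_P0_fixed:
  assumes "P 0 *v x = x" "k \<le> m" "0 < k"
  shows "(P k *v x) \<bullet> x = 0"
proof -
  have "(P k *v x) \<bullet> x = ((P k ** P 0) *v x) \<bullet> x"
    using assms(1) by (simp add: matrix_vector_mul_assoc[symmetric])
  also have "\<dots> = - ((P k *v x) \<bullet> (P 0 *v x))"
    using P_anticommute[of k 0] assms(2,3)
    by (simp add: matrix_vector_mult_uminus matrix_vector_mul_assoc[symmetric]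
        inner_matrix_vector_left[of "P 0"] P_transpose)
  finally show ?thesis using assms(1) by simp
qed

lemma clifford_map_P_mult_P:
  assumes "P 0 *v x = x" "i \<le> m" "j \<le> m" "0 < i" "0 < j" "i \<noteq> j"
  shows "clifford_map m P (P i *v (P j *v x)) = clifford_map m P x"
proof -
  have "(P k *v (P i *v (P j *v x))) \<bullet> (P i *v (P j *v x)) = (P k *v x) \<bullet> x" if k: "k \<le> m" for k
  proof -
    have "(P k *v (P i *v (P j *v x))) \<bullet> (P i *v (P j *v x)) =
        ((P j ** (P i ** P k ** P i) ** P j) *v x) \<bullet> x"
      using assms(2,3) by (simp add: inner_P_conj)
    \<comment> \<open>Conjugation by \<open>P\<^sub>jP\<^sub>i\<close> negates \<open>P\<^sub>k\<close> exactly for \<open>k \<in> {i, j}\<close>, where the form vanishes at x.\<close>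
    also have "P j ** (P i ** P k ** P i) ** P j = (if k = i \<or> k = j then - P k else P k)"
      using assms(2,3,6) k
      by (cases "k = i"; cases "k = j")
        (simp_all add: P_conj_P matrix_uminus_left matrix_uminus_right)
    also have "((if k = i \<or> k = j then - P k else P k) *v x) \<bullet> x = (P k *v x) \<bullet> x"
      using P_quadratic_form_eq_0_if_P0_fixed[OF assms(1) k] assms(4,5)
      by (auto simp: matrix_vector_mult_uminus)
    finally show ?thesis .
  qed
  then show ?thesis
    unfolding clifford_map_def by (intro sum.cong) auto
qed

lemma P_mult_P_orthogonal:
  assumes "i \<le> m" "j \<le> m" "i \<noteq> j"
  shows "(P i *v (P j *v x)) \<bullet> x = 0"
proof -
  have "transpose (P i ** P j) = - (P i ** P j)"
    using assms P_anticommute[of j i] by (simp add: matrix_transpose_mul P_transpose)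
  from quadratic_form_skew_symmetric[OF this] show ?thesis
    by (simp add: matrix_vector_mul_assoc)
qed

end

definition rank_one_words :: "nat list list" where
  "rank_one_words = [[0], [1,2,3,4], [1,2,5,6], [1,3,5,7], [1,2,7,8]]"

lemma rank_one_words_letters: "w \<in> set rank_one_words \<Longrightarrow> set w \<subseteq> {..8}"
  by (auto simp: rank_one_words_def)

lemma reversal_sign_rank_one_words: "w \<in> set rank_one_words \<Longrightarrow> reversal_sign w = 1"
  by (auto simp: rank_one_words_def commute_sign_def)

lemma monomial_commute_sign_rank_one_words:
  "u \<in> set rank_one_words \<Longrightarrow> v \<in> set rank_one_words \<Longrightarrow> monomial_commute_sign u v = 1"
  by (auto simp: rank_one_words_def monomial_commute_sign_def commute_sign_def)

lemma rank_one_words_anticommute: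
  assumes "s \<in> set (subseqs rank_one_words)" "s \<noteq> []"
  obtains i where "i < 10" "odd (length (filter (\<lambda>j. j \<noteq> i) (concat s)))"
proof -
  have "\<forall>s\<in>set (subseqs rank_one_words). s \<noteq> [] \<longrightarrow>
      list_ex (\<lambda>i. odd (length (filter (\<lambda>j. j \<noteq> i) (concat s)))) [0..<10]"
    by (simp add: rank_one_words_def Let_def upt_rec)
  then show ?thesis
    using assms that by (auto simp: list_ex_iff)
qed

definition joint_eigenproj :: "(nat \<Rightarrow> real^'n^'n) \<Rightarrow> real^'n^'n" where
  "joint_eigenproj P = matrix_prod_list (map eigenproj_one (map (clifford_monomial P) rank_one_words))"

context clifford
begin

lemma rank_one_words_letters_le: "8 \<le> m \<Longrightarrow> w \<in> set rank_one_words \<Longrightarrow> set w \<subseteq> {..m}"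
  using rank_one_words_letters by fastforce

lemma joint_eigenproj_projection:
  assumes "8 \<le> m"
  shows "transpose (joint_eigenproj P) = joint_eigenproj P \<and>
    joint_eigenproj P ** joint_eigenproj P = joint_eigenproj P"
  unfolding joint_eigenproj_def
proof (rule eigenproj_one_prod_projection; intro ballI)
  fix V W assume "V \<in> set (map monomial rank_one_words)" "W \<in> set (map monomial rank_one_words)"
  then obtain u w where u: "u \<in> set rank_one_words" "V = monomial u"
    and w: "w \<in> set rank_one_words" "W = monomial w"
    by auto
  show "transpose W = W \<and> W ** W = mat 1"
    using monomial_symmetric_involution[OF rank_one_words_letters_le[OF assms w(1)]]
      reversal_sign_rank_one_words[OF w(1)] w(2) by simp
  show "V ** W = W ** V"
    using monomial_commute[OF rank_one_words_letters_le[OF assms u(1)]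
        rank_one_words_letters_le[OF assms w(1)]]
      monomial_commute_sign_rank_one_words[OF u(1) w(1)] u(2) w(2) by simp
qed

lemma trace_joint_eigenproj:
  assumes "9 \<le> m"
  shows "trace (joint_eigenproj P) = CARD('n) / 32"
proof -
  have "trace (matrix_prod_list s) = 0"
    if s: "s \<in> set (subseqs (map monomial rank_one_words))" "s \<noteq> []" for s
  proof -
    have "s \<in> map monomial ` set (subseqs rank_one_words)"
      using s(1) by (simp add: subseqs_map)
    then obtain ws where ws: "ws \<in> set (subseqs rank_one_words)" "s = map monomial ws"
      by blast
    then obtain i where i: "i < 10" "odd (length (filter (\<lambda>j. j \<noteq> i) (concat ws)))"
      using rank_one_words_anticommute s(2) by blast
    have "set ws \<subseteq> set rank_one_words"
      using ws(1) by (metis Pow_iff image_eqI subseqs_powset)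
    then have "set (concat ws) \<subseteq> {..m}"
      using rank_one_words_letters_le assms by fastforce
    then have "trace (monomial (concat ws)) = 0"
      using i assms by (intro trace_monomial_eq_0[of i]) auto
    then show ?thesis
      using ws(2) by (simp add: matrix_prod_list_clifford_monomials)
  qed
  then have "trace (joint_eigenproj P) = CARD('n) / 2 ^ length rank_one_words"
    unfolding joint_eigenproj_def by (subst trace_eigenproj_one_prod_traceless) auto
  then show ?thesis by (simp add: rank_one_words_def)
qed

lemma P0_mult_joint_eigenproj: "P 0 ** joint_eigenproj P = joint_eigenproj P"
  using involution_mult_eigenproj_one[of "P 0"] P_square[of 0]
  by (simp add: joint_eigenproj_def rank_one_words_def matrix_mul_assoc)

lemma joint_eigenproj_commute:
  assumes "8 \<le> m" "\<forall>j\<le>m. P j ** A = A ** P j"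
  shows "A ** joint_eigenproj P = joint_eigenproj P ** A"
  unfolding joint_eigenproj_def
proof (rule matrix_prod_list_commute)
  fix E assume "E \<in> set (map eigenproj_one (map monomial rank_one_words))"
  then obtain w where "w \<in> set rank_one_words" "E = eigenproj_one (monomial w)" by auto
  moreover have "set w \<subseteq> {..m}"
    using \<open>w \<in> set rank_one_words\<close> rank_one_words_letters_le assms(1) by blast
  ultimately show "A ** E = E ** A"
    using commute_monomial[OF assms(2)] eigenproj_one_commute by metis
qed

end

theorem proposition5p3:
  fixes P :: "nat \<Rightarrow> real^32^32"
  assumes "clifford_system 9 P"
  shows "\<not> homogeneous_foliation (clifford_leaf 9 P)"
proof
  interpret clifford 9 P by (rule clifford.intro) (rule assms)
  assume "homogeneous_foliation (clifford_leaf 9 P)"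
  then obtain H where orthogonal: "H \<subseteq> {A. orthogonal_matrix A}"
    and orbits: "\<forall>x\<in>sphere 0 1. (\<lambda>A. A *v x) ` H = clifford_leaf 9 P x"
    unfolding homogeneous_foliation_def by blast
  define Q where "Q = joint_eigenproj P"
  have Q: "transpose Q = Q" "Q ** Q = Q" "trace Q = 1"
    using joint_eigenproj_projection trace_joint_eigenproj by (simp_all add: Q_def)
  have commute: "A ** Q = Q ** A" if "A \<in> H" for A
  proof -
    have "\<forall>x\<in>sphere 0 1. clifford_map 9 P (A *v x) = clifford_map 9 P x"
      using orbits that by (auto simp: clifford_leaf_def)
    then show ?thesis
      using commute_P_if_preserves_clifford_map orthogonal that joint_eigenproj_commute
      by (auto simp: Q_def)
  qed
  obtain x where x: "norm x = 1" "Q *v x = x"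
    using idempotent_fixes_unit_vector[OF Q(2)] Q(3) by (metis zero_neq_one)
  then have "P 0 *v x = x"
    using P0_mult_joint_eigenproj by (metis Q_def matrix_vector_mul_assoc)
  define y where "y = P 1 *v (P 2 *v x)"
  have y: "norm y = 1" "x \<bullet> y = 0" "y \<in> clifford_leaf 9 P x"
    using x \<open>P 0 *v x = x\<close> clifford_map_P_mult_P[of x 1 2] P_mult_P_orthogonal[of 1 2 x]
    by (simp_all add: y_def norm_P inner_commute clifford_leaf_def)
  then obtain A where "A \<in> H" "y = A *v x"
    using orbits x(1) by (metis imageE mem_sphere_0)
  then have "Q *v y = y"
    using commute x(2) by (metis matrix_vector_mul_assoc)
  then show False
    using trace_projection_ge_2[OF Q(1,2) x(2) _ x(1) y(1,2)] Q(3) by simp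
qed

end
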